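(* Let $n,r$ be integers with $0\le r\le n$, $c$ an integer, and $A$ a function on $\mathbb{Z}^n$. Assume there are functions $B_j(x,y)$ on $\mathbb{Z}^2$ and $A'_j(k_1,\ldots,k_{n-2})$ on $\mathbb{Z}^{n-2}$, $1\le j\le m$, such that $$D_iA(k_1,\ldots,k_n)=\sum_{j=1}^mB_j(k_i+i,k_{i+1}+i)\,A'_j(k_1,\ldots,k_{i-1},k_{i+2}+2,\ldots,k_n+2)$$ for all $i$ with $1\le i\le n-1$. Then for every $i$ with $1\le i\le n-r-1$, \begin{multline*} D_{i} G_q(r,n,c,A)(k_{1},\ldots,k_{n-r}) = \sum_{j=1}^{m} \frac{(-1)^{r}}{2^{r}} q^{r(-2 n +r + 1)} \, D(r,B_{j})(k_{i}+i,k_{i+1}+i) \\ \times G_q(r,n-2,c+2,A'_{j})(k_{1},\ldots,k_{i-1},k_{i+2}+2,\ldots,k_{n-r}+2). \end{multline*}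
   Context: $q$ is an indeterminate. Sums use the convention: $\sum_{i=a}^bf(i)=f(a)+\cdots+f(b)$ if $a\le b$, $0$ if $b=a-1$, and $-f(b+1)-\cdots-f(a-1)$ if $b+1\le a-1$. For a function $H$ of $N$ integer variables and $1\le j\le N-1$, $D_jH(k_1,\ldots,k_N)=H(k_1,\ldots,k_N)+H(k_1,\ldots,k_{j-1},k_{j+1}+1,k_j-1,k_{j+2},\ldots,k_N)$. For integers $0\le r\le n$, an integer $c$ and a function $A$ on $\mathbb{Z}^n$, define $G_q(r,n,c,A)$ (a function of $n-r$ integer variables) recursively: $G_q(0,n,c,A)=A$ and $$G_q(r,n,c,A)(k_1,\ldots,k_{n-r})=\sum_{l_1=0}^{k_1}\sum_{l_2=k_1}^{k_2}\cdots\sum_{l_{n-r}=k_{n-r-1}}^{k_{n-r}}\sum_{l_{n-r+1}=k_{n-r}}^{c}G_q(r-1,n,c,A)(l_1,\ldots,l_{n-r+1})\,q^{l_1+\cdots+l_{n-r+1}}.$$ For a function $B(x,y)$ and $r\ge0$, define $D(0,B)=B$ and $D(r,B)(x,y)=\sum_{x'=x+1}^{y+1}\sum_{y'=x}^{y}D(r-1,B)(x',y')\,q^{x'+y'}$. *)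

theory Defs
  imports Main
begin

definition gsum :: "(int \<Rightarrow> 'a::ab_group_add) \<Rightarrow> int \<Rightarrow> int \<Rightarrow> 'a" where
  "gsum f a b = (if a \<le> b then sum f {a..b}
                 else if b = a - 1 then 0 else - sum f {b+1..a-1})"

text \<open>Nested sum: for bounds list b0,b1,...,bm, sums over l1 from b0 to b1, l2 from b1 to b2, ...,
  lm from b(m-1) to bm, of f [l1,...,lm].\<close>
fun nsum :: "(int list \<Rightarrow> 'a::ab_group_add) \<Rightarrow> int list \<Rightarrow> 'a" where
  "nsum f (a # b # rest) = gsum (\<lambda>l. nsum (\<lambda>ls. f (l # ls)) (b # rest)) a b"
| "nsum f _ = f []"

text \<open>The operator D_j (1-indexed j) on functions of integer vectors (lists).\<close>
definition Dop :: "nat \<Rightarrow> (int list \<Rightarrow> 'a::plus) \<Rightarrow> int list \<Rightarrow> 'a" where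
  "Dop j H ks = H ks + H (take (j - 1) ks @ [ks ! j + 1, ks ! (j - 1) - 1] @ drop (j + 1) ks)"

text \<open>G_q(r,n,c,A); evaluated at lists of length n - r.\<close>
fun Gq :: "'a::field \<Rightarrow> nat \<Rightarrow> nat \<Rightarrow> int \<Rightarrow> (int list \<Rightarrow> 'a) \<Rightarrow> int list \<Rightarrow> 'a" where
  "Gq q 0 n c A = A"
| "Gq q (Suc r) n c A = (\<lambda>ks. nsum (\<lambda>ls. Gq q r n c A ls * q powi (sum_list ls)) (0 # ks @ [c]))"

fun Dr :: "'a::field \<Rightarrow> nat \<Rightarrow> (int \<Rightarrow> int \<Rightarrow> 'a) \<Rightarrow> int \<Rightarrow> int \<Rightarrow> 'a" where
  "Dr q 0 B = B"
| "Dr q (Suc r) B = (\<lambda>x y. gsum (\<lambda>x'. gsum (\<lambda>y'. Dr q r B x' y' * q powi (x' + y')) x y) (x + 1) (y + 1))"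

end

theory Submission
  imports Defs
begin

text \<open>
  Say that A factorizes (\<open>Dop_factors\<close>) if it satisfies the hypothesis of the theorem.
  This property survives the two operations from which \<open>G_q(r+1)\<close> is built out of
  \<open>G_q(r)\<close>. Multiplying by the weight \<open>q^(l_1+...+l_N)\<close> only rescales \<open>B_j(x,y)\<close> by
  \<open>q^(x+y+2-2N)\<close>. Summing over the interlacing variables \<open>0 \<le> l_1 \<le> k_1 \<le> l_2 \<le> ... \<le> c\<close>
  turns \<open>B_j\<close> into \<open>-D(1,B_j)/2\<close> (with \<open>q = 1\<close>): \<open>D_i\<close> only moves the bounds of
  \<open>l_i, l_(i+1), l_(i+2)\<close>, and after splitting the summation ranges what remains are two
  double sums over a square. Pairing each term with its reflection in the diagonal, the
  hypothesis at position \<open>i\<close> resp. \<open>i+1\<close> evaluates each of them as half a sum of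
  right-hand sides.
  Induction on \<open>r\<close> collects the constant \<open>(-1/2)^r q^(r(-2n+r+1))\<close>.
\<close>

lemma gsum_eq_sum_diff: "gsum f a b = sum f {a..b} - sum f {b+1..a-1}"
  unfolding gsum_def by auto

lemma gsum_upper_Suc: "gsum f a (b+1) = gsum f a b + f (b+1)"
proof (cases "a \<le> b + 1")
  case True
  then have "{a..b+1} = insert (b+1) {a..b}" "{b+1+1..a-1} = {}" "{b+1..a-1} = {}" by auto
  then show ?thesis unfolding gsum_eq_sum_diff by (simp add: add.commute)
next
  case False
  then have "{b+1..a-1} = insert (b+1) {b+1+1..a-1}" "{a..b+1} = {}" "{a..b} = {}" by auto
  then show ?thesis unfolding gsum_eq_sum_diff by simp
qed

lemma gsum_split: "gsum f a b + gsum f (b+1) c = gsum f a c"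
proof (induction c rule: int_induct[where k=b])
  case base
  then show ?case by (simp add: gsum_def)
next
  case (step1 i)
  then show ?case by (simp add: gsum_upper_Suc add.assoc)
next
  case (step2 i)
  with gsum_upper_Suc[of f a "i-1"] gsum_upper_Suc[of f "b+1" "i-1"] show ?case
    by (simp add: algebra_simps)
qed

lemma gsum_reverse_bounds: "gsum f (b+1) (a-1) = - gsum f a b"
  using gsum_split[of f a b "a-1"] by (simp add: gsum_def eq_neg_iff_add_eq_0 add.commute)

lemma gsum_add: "gsum (\<lambda>x. f x + g x) a b = gsum f a b + gsum g a b"
  unfolding gsum_eq_sum_diff by (simp add: sum.distrib)

lemma gsum_uminus: "gsum (\<lambda>x. - f x) a b = - gsum f a b"
  unfolding gsum_eq_sum_diff by (simp add: sum_negf)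

lemma gsum_distrib_left: "(c::'a::comm_ring) * gsum f a b = gsum (\<lambda>x. c * f x) a b"
  unfolding gsum_eq_sum_diff by (simp add: sum_distrib_left right_diff_distrib)

lemma gsum_distrib_right: "gsum f a b * (c::'a::comm_ring) = gsum (\<lambda>x. f x * c) a b"
  unfolding gsum_eq_sum_diff by (simp add: sum_distrib_right left_diff_distrib)

lemma gsum_divide: "gsum (\<lambda>x. f x / (c::'a::field)) a b = gsum f a b / c"
  unfolding gsum_eq_sum_diff by (simp add: sum_divide_distrib diff_divide_distrib)

lemma gsum_sum_commute: "gsum (\<lambda>x. \<Sum>j\<in>J. f j x) a b = (\<Sum>j\<in>J. gsum (f j) a b)"
  unfolding gsum_eq_sum_diff by (simp add: sum.swap[of _ J] sum_subtractf)

lemma gsum_swap: "gsum (\<lambda>x. gsum (f x) c d) a b = gsum (\<lambda>y. gsum (\<lambda>x. f x y) a b) c d"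
  unfolding gsum_eq_sum_diff sum_subtractf by (simp add: sum.swap[of _ "{a..b}"] sum.swap[of _ "{b+1..a-1}"])

lemma gsum_shift_bounds: "gsum f (a+k) (b+k) = gsum (\<lambda>x. f (x+k)) a b"
proof (induction b rule: int_induct[where k="a-1"])
  case base
  then show ?case by (simp add: gsum_def)
next
  case (step1 i)
  with gsum_upper_Suc[of f "a+k" "i+k"] gsum_upper_Suc[of "\<lambda>x. f (x+k)" a i] show ?case
    by (simp add: algebra_simps)
next
  case (step2 i)
  with gsum_upper_Suc[of f "a+k" "i-1+k"] gsum_upper_Suc[of "\<lambda>x. f (x+k)" a "i-1"] show ?case
    by (simp add: algebra_simps)
qed

definition box_sum :: "(int \<Rightarrow> int \<Rightarrow> 'a::ab_group_add) \<Rightarrow> int \<Rightarrow> int \<Rightarrow> 'a" where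
  "box_sum B x y = gsum (\<lambda>x'. gsum (B x') x y) (x+1) (y+1)"

lemma box_sum_shift: "box_sum B (x+k) (y+k) = box_sum (\<lambda>x y. B (x+k) (y+k)) x y"
proof -
  have "box_sum B (x+k) (y+k) = gsum (\<lambda>x'. gsum (B x') (x+k) (y+k)) (x+1+k) (y+1+k)"
    by (simp add: box_sum_def ac_simps)
  also have "\<dots> = box_sum (\<lambda>x y. B (x+k) (y+k)) x y"
    unfolding box_sum_def gsum_shift_bounds ..
  finally show ?thesis .
qed

lemma box_sum_reflect: "box_sum (\<lambda>x y. B (y+1) (x-1)) a b = box_sum B a b"
proof -
  have "box_sum (\<lambda>x y. B (y+1) (x-1)) a b = gsum (\<lambda>x. gsum (\<lambda>y. B (y+1) x) a b) a b"
    using gsum_shift_bounds[of "\<lambda>x. gsum (\<lambda>y. B (y+1) (x-1)) a b" a 1 b] by (simp add: box_sum_def)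
  also have "\<dots> = gsum (\<lambda>x. gsum (\<lambda>y. B y x) (a+1) (b+1)) a b"
    using gsum_shift_bounds[of "\<lambda>y. B y _" a 1 b] by simp
  also have "\<dots> = box_sum B a b"
    unfolding box_sum_def by (rule gsum_swap[symmetric])
  finally show ?thesis .
qed

lemma box_sum_symmetrize:
  fixes H :: "int \<Rightarrow> int \<Rightarrow> 'a::field_char_0"
  assumes "\<And>x y. H x y + H (y+1) (x-1) = (\<Sum>j\<in>J. E j x y * w j)"
  shows "box_sum H a b = (\<Sum>j\<in>J. box_sum (E j) a b * w j) / 2"
proof -
  have "(\<Sum>j\<in>J. box_sum (E j) a b * w j) = box_sum (\<lambda>x y. H x y + H (y+1) (x-1)) a b"
    unfolding assms box_sum_def by (simp add: gsum_sum_commute flip: gsum_distrib_right)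
  also have "\<dots> = 2 * box_sum H a b"
    unfolding box_sum_def gsum_add
    using box_sum_reflect[of H a b] unfolding box_sum_def by simp
  finally show ?thesis
    by simp
qed

lemma triple_gsum_Dop_identity:
  fixes h :: "int \<Rightarrow> int \<Rightarrow> int \<Rightarrow> 'a::field_char_0"
  assumes swap12: "\<And>X Y Z. h X Y Z + h (Y+1) (X-1) Z = (\<Sum>j\<in>J. E j X Y * K j (Z+2))"
    and swap23: "\<And>X Y Z. h X Y Z + h X (Z+1) (Y-1) = (\<Sum>j\<in>J. E j (Y+1) (Z+1) * K j X)"
  shows "gsum (\<lambda>X. gsum (\<lambda>Y. gsum (h X Y) b s) a b) p a
       + gsum (\<lambda>X. gsum (\<lambda>Y. gsum (h X Y) (a-1) s) (b+1) (a-1)) p (b+1)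
     = - (\<Sum>j\<in>J. box_sum (E j) a b * gsum (K j) p (s+2)) / 2"
proof -
  \<comment> \<open>The second sum is \<open>-(S + T1 + T2)\<close>; \<open>T1\<close> and \<open>T2\<close> are square sums symmetrized by
    \<open>swap23\<close> resp. \<open>swap12\<close>.\<close>
  define S where "S = gsum (\<lambda>X. gsum (\<lambda>Y. gsum (h X Y) b s) a b) p a"
  define T1 where "T1 = gsum (\<lambda>X. box_sum (h X) (a-1) (b-1)) p a"
  define T2 where "T2 = box_sum (\<lambda>X Y. gsum (h X Y) (a-1) s) a b"
  have "gsum (\<lambda>X. gsum (\<lambda>Y. gsum (h X Y) (a-1) s) (b+1) (a-1)) p (b+1) = - (S + T1 + T2)"
  proof -
    have "gsum (\<lambda>X. gsum (\<lambda>Y. gsum (h X Y) (a-1) s) (b+1) (a-1)) p (b+1)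
        = - gsum (\<lambda>X. gsum (\<lambda>Y. gsum (h X Y) (a-1) s) a b) p (b+1)"
      by (simp only: gsum_reverse_bounds gsum_uminus)
    also have "\<dots> = - (gsum (\<lambda>X. gsum (\<lambda>Y. gsum (h X Y) (a-1) s) a b) p a + T2)"
      unfolding T2_def box_sum_def by (simp only: gsum_split)
    also have "gsum (\<lambda>X. gsum (\<lambda>Y. gsum (h X Y) (a-1) s) a b) p a = T1 + S"
      unfolding S_def T1_def box_sum_def
      by (simp add: gsum_split[of _ "a-1" "b-1" s, simplified] flip: gsum_add)
    finally show ?thesis by (simp add: algebra_simps)
  qed
  moreover have "T1 = (\<Sum>j\<in>J. box_sum (E j) a b * gsum (K j) p a) / 2"
  proof -
    have inner: "box_sum (h X) (a-1) (b-1) = (\<Sum>j\<in>J. box_sum (E j) a b * K j X) / 2" for X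
      using box_sum_symmetrize[where H="h X" and E="\<lambda>j Y Z. E j (Y+1) (Z+1)", OF swap23]
        box_sum_shift[of "E _" "a-1" 1 "b-1"] by simp
    show ?thesis
      unfolding T1_def inner by (simp add: gsum_divide gsum_sum_commute flip: gsum_distrib_left)
  qed
  moreover have "T2 = (\<Sum>j\<in>J. box_sum (E j) a b * gsum (K j) (a+1) (s+2)) / 2"
  proof (unfold T2_def, rule box_sum_symmetrize)
    have "gsum (\<lambda>Z. K j (Z+2)) (a-1) s = gsum (K j) (a+1) (s+2)" for j
      using gsum_shift_bounds[of "K j" "a-1" 2 s] by (simp add: add.commute)
    then show "gsum (h X Y) (a-1) s + gsum (h (Y+1) (X-1)) (a-1) s
        = (\<Sum>j\<in>J. E j X Y * gsum (K j) (a+1) (s+2))" for X Y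
      by (simp add: gsum_add[symmetric] swap12 gsum_sum_commute flip: gsum_distrib_left)
  qed
  ultimately show ?thesis
    by (simp add: S_def flip: gsum_split[of "K _" p a "s+2"])
      (simp add: algebra_simps sum.distrib add_divide_distrib)
qed

lemma nsum_append:
  "pre \<noteq> [] \<Longrightarrow> nsum f (pre @ ys) = nsum (\<lambda>l1. nsum (\<lambda>l2. f (l1 @ l2)) (last pre # ys)) pre"
proof (induction pre arbitrary: f rule: induct_list012)
  case (3 x y zs)
  show ?case using "3.IH"(2)[of "\<lambda>ls. f (_ # ls)"] by simp
qed simp_all

lemma nsum_add: "nsum (\<lambda>ls. f ls + g ls) bs = nsum f bs + nsum g bs"
  by (induction bs arbitrary: f g rule: induct_list012) (simp_all add: gsum_add)

lemma nsum_distrib_left: "(c::'a::comm_ring) * nsum f bs = nsum (\<lambda>ls. c * f ls) bs"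
  by (induction f bs rule: nsum.induct) (simp_all add: gsum_distrib_left)

lemma nsum_sum_commute: "nsum (\<lambda>ls. \<Sum>j\<in>J. f j ls) bs = (\<Sum>j\<in>J. nsum (f j) bs)"
  by (induction "\<lambda>ls. \<Sum>j\<in>J. f j ls" bs arbitrary: f rule: nsum.induct)
    (simp_all add: gsum_sum_commute)

lemma nsum_cong:
  "(\<And>ls. length ls = length bs - 1 \<Longrightarrow> f ls = g ls) \<Longrightarrow> nsum f bs = nsum g bs"
proof (induction f bs arbitrary: g rule: nsum.induct)
  case (1 f a b rest)
  then have "nsum (\<lambda>ls. f (l # ls)) (b # rest) = nsum (\<lambda>ls. g (l # ls)) (b # rest)" for l
    by simp
  then show ?case by simp
qed simp_all

lemma nsum_shift_bounds:
  "nsum f (map (\<lambda>k. k + d) bs) = nsum (\<lambda>ls. f (map (\<lambda>k. k + d) ls)) bs"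
proof (induction f bs rule: nsum.induct)
  case (1 f a b rest)
  then show ?case
    using gsum_shift_bounds[of "\<lambda>l. nsum (\<lambda>ls. f (l # map (\<lambda>k. k + d) ls)) (b # rest)" a d b]
    by simp
qed simp_all

definition interlacing_sum :: "int \<Rightarrow> (int list \<Rightarrow> 'a::ab_group_add) \<Rightarrow> int list \<Rightarrow> 'a" where
  "interlacing_sum c F ks = nsum F (0 # ks @ [c])"

lemma Gq_Suc_interlacing_sum:
  "Gq q (Suc r) n c A = interlacing_sum c (\<lambda>ls. Gq q r n c A ls * q powi sum_list ls)"
  by (simp add: interlacing_sum_def fun_eq_iff)

lemma interlacing_sum_split1_shifted:
  assumes "post @ [c] = s # V"
  shows "interlacing_sum (c + 2) F (pre @ map (\<lambda>k. k + 2) post)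
       = nsum (\<lambda>l1. gsum (\<lambda>W. nsum (\<lambda>l3. F (l1 @ W # map (\<lambda>k. k + 2) l3)) (s # V))
           (last (0 # pre)) (s + 2)) (0 # pre)"
proof -
  have eq: "0 # (pre @ map (\<lambda>k. k + 2) post) @ [c + 2] = (0 # pre) @ (s + 2) # map (\<lambda>k. k + 2) V"
    using arg_cong[OF assms, of "map (\<lambda>k. k + 2)"] by simp
  have inner: "nsum (\<lambda>l3. F (l1 @ W # l3)) ((s + 2) # map (\<lambda>k. k + 2) V)
      = nsum (\<lambda>l3. F (l1 @ W # map (\<lambda>k. k + 2) l3)) (s # V)" for l1 W
    using nsum_shift_bounds[of "\<lambda>l3. F (l1 @ W # l3)" 2 "s # V"] by simp
  show ?thesis
    unfolding interlacing_sum_def eq by (subst nsum_append) (simp_all add: inner)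
qed

lemma interlacing_sum_split3:
  assumes "post @ [c] = s # V"
  shows "interlacing_sum c F (pre @ x # y # post)
       = nsum (\<lambda>l1. gsum (\<lambda>X. gsum (\<lambda>Y. gsum (\<lambda>Z.
           nsum (\<lambda>l3. F (l1 @ X # Y # Z # l3)) (s # V)) y s) x y) (last (0 # pre)) x) (0 # pre)"
proof -
  have eq: "0 # (pre @ x # y # post) @ [c] = (0 # pre) @ x # y # s # V"
    using assms by simp
  show ?thesis
    unfolding interlacing_sum_def eq by (subst nsum_append) simp_all
qed

definition Dop_factors ::
    "nat \<Rightarrow> 'b set \<Rightarrow> (int list \<Rightarrow> 'a::semiring_0) \<Rightarrow> ('b \<Rightarrow> int \<Rightarrow> int \<Rightarrow> 'a) \<Rightarrow> ('b \<Rightarrow> int list \<Rightarrow> 'a) \<Rightarrow> bool"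
  where "Dop_factors n J A B A' \<longleftrightarrow> (\<forall>i ks. 1 \<le> i \<and> i \<le> n - 1 \<and> length ks = n \<longrightarrow>
    Dop i A ks = (\<Sum>j\<in>J. B j (ks ! (i - 1) + int i) (ks ! i + int i)
                   * A' j (take (i - 1) ks @ map (\<lambda>k. k + 2) (drop (i + 1) ks))))"

lemma all_adjacent_positions_iff:
  fixes P :: "nat \<Rightarrow> 'a list \<Rightarrow> bool"
  shows "(\<forall>i ks. 1 \<le> i \<and> i \<le> n - 1 \<and> length ks = n \<longrightarrow> P i ks)
   \<longleftrightarrow> (\<forall>pre x y post. length pre + length post + 2 = n \<longrightarrow> P (Suc (length pre)) (pre @ x # y # post))"
proof (intro iffI allI impI)
  fix pre post :: "'a list" and x y :: 'a
  assume "\<forall>i ks. 1 \<le> i \<and> i \<le> n - 1 \<and> length ks = n \<longrightarrow> P i ks"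
    and "length pre + length post + 2 = n"
  then show "P (Suc (length pre)) (pre @ x # y # post)"
    by simp
next
  fix i and ks :: "'a list"
  assume H: "\<forall>pre x y post. length pre + length post + 2 = n \<longrightarrow> P (Suc (length pre)) (pre @ x # y # post)"
    and i: "1 \<le> i \<and> i \<le> n - 1 \<and> length ks = n"
  have "i - 1 < length ks" "i < length ks" "Suc (i - 1) = i"
    using i by auto
  then have "drop (i - 1) ks = ks ! (i - 1) # ks ! i # drop (i + 1) ks"
    by (metis Cons_nth_drop_Suc Suc_eq_plus1)
  then have "ks = take (i - 1) ks @ ks ! (i - 1) # ks ! i # drop (i + 1) ks"
    by (metis append_take_drop_id)
  moreover have "Suc (length (take (i - 1) ks)) = i"
    and "length (take (i - 1) ks) + length (drop (i + 1) ks) + 2 = n"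
    using i by auto
  ultimately show "P i ks"
    using H by metis
qed

lemma Dop_factors_iff:
  "Dop_factors n J A B A' \<longleftrightarrow> (\<forall>pre x y post. length pre + length post + 2 = n \<longrightarrow>
     A (pre @ x # y # post) + A (pre @ (y+1) # (x-1) # post)
     = (\<Sum>j\<in>J. B j (x + int (Suc (length pre))) (y + int (Suc (length pre)))
                 * A' j (pre @ map (\<lambda>k. k + 2) post)))"
  unfolding Dop_factors_def all_adjacent_positions_iff by (simp add: Dop_def nth_append)

lemma Dop_factors_weight:
  fixes q :: "'a::field"
  assumes q: "q \<noteq> 0" and factors: "Dop_factors n J A B A'"
  shows "Dop_factors n J (\<lambda>ls. A ls * q powi sum_list ls)
           (\<lambda>j x y. q powi (2 - 2 * int n) * (B j x y * q powi (x + y)))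
           (\<lambda>j ls. A' j ls * q powi sum_list ls)"
  unfolding Dop_factors_iff
proof (intro allI impI)
  fix pre post :: "int list" and x y :: int
  assume len: "length pre + length post + 2 = n"
  define t where "t = int (Suc (length pre))"
  have exponent: "sum_list (pre @ x # y # post)
      = (2 - 2 * int n) + (x + t + (y + t)) + sum_list (pre @ map (\<lambda>k. k + 2) post)"
    using len by (simp add: t_def sum_list_addf sum_list_triv)
  have weight: "q powi sum_list (pre @ x # y # post)
      = q powi (2 - 2 * int n) * q powi (x + t + (y + t)) * q powi sum_list (pre @ map (\<lambda>k. k + 2) post)"
    unfolding exponent by (simp only: power_int_add q simp_thms)
  have pair: "A (pre @ x # y # post) + A (pre @ (y+1) # (x-1) # post)
      = (\<Sum>j\<in>J. B j (x + t) (y + t) * A' j (pre @ map (\<lambda>k. k + 2) post))"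
    using factors len unfolding Dop_factors_iff t_def by blast
  have same_sum: "sum_list (pre @ (y+1) # (x-1) # post) = sum_list (pre @ x # y # post)"
    by simp
  have "(A (pre @ x # y # post) + A (pre @ (y+1) # (x-1) # post)) * q powi sum_list (pre @ x # y # post)
      = (\<Sum>j\<in>J. q powi (2 - 2 * int n) * (B j (x + t) (y + t) * q powi (x + t + (y + t)))
            * (A' j (pre @ map (\<lambda>k. k + 2) post) * q powi sum_list (pre @ map (\<lambda>k. k + 2) post)))"
    unfolding weight pair sum_distrib_right by (simp add: mult_ac)
  then show "A (pre @ x # y # post) * q powi sum_list (pre @ x # y # post)
      + A (pre @ (y+1) # (x-1) # post) * q powi sum_list (pre @ (y+1) # (x-1) # post)
      = (\<Sum>j\<in>J. q powi (2 - 2 * int n) * (B j (x + int (Suc (length pre))) (y + int (Suc (length pre)))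
            * q powi (x + int (Suc (length pre)) + (y + int (Suc (length pre)))))
            * (A' j (pre @ map (\<lambda>k. k + 2) post) * q powi sum_list (pre @ map (\<lambda>k. k + 2) post)))"
    unfolding same_sum t_def[symmetric] by (simp only: distrib_right)
qed

lemma Dop_factors_suffix_nsum:
  fixes F :: "int list \<Rightarrow> 'a::comm_ring"
  assumes "Dop_factors (m + length V) J F B F'"
  shows "Dop_factors m J (\<lambda>ls. nsum (\<lambda>l3. F (ls @ l3)) (s # V)) B
           (\<lambda>j ls. nsum (\<lambda>l3. F' j (ls @ map (\<lambda>k. k + 2) l3)) (s # V))"
  unfolding Dop_factors_iff
proof (intro allI impI)
  fix pre post :: "int list" and x y :: int
  assume len: "length pre + length post + 2 = m"
  define t where "t = int (Suc (length pre))"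
  have "F (pre @ x # y # post @ l3) + F (pre @ (y+1) # (x-1) # post @ l3)
      = (\<Sum>j\<in>J. B j (x + t) (y + t) * F' j (pre @ map (\<lambda>k. k + 2) post @ map (\<lambda>k. k + 2) l3))"
    if "length l3 = length (s # V) - 1" for l3
  proof -
    have "length pre + length (post @ l3) + 2 = m + length V"
      using len that by simp
    from assms[unfolded Dop_factors_iff, rule_format, OF this] show ?thesis
      by (simp add: t_def)
  qed
  then have "nsum (\<lambda>l3. F (pre @ x # y # post @ l3) + F (pre @ (y+1) # (x-1) # post @ l3)) (s # V)
      = nsum (\<lambda>l3. \<Sum>j\<in>J. B j (x + t) (y + t) * F' j (pre @ map (\<lambda>k. k + 2) post @ map (\<lambda>k. k + 2) l3)) (s # V)"
    by (rule nsum_cong)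
  then show "nsum (\<lambda>l3. F ((pre @ x # y # post) @ l3)) (s # V)
      + nsum (\<lambda>l3. F ((pre @ (y+1) # (x-1) # post) @ l3)) (s # V)
      = (\<Sum>j\<in>J. B j (x + int (Suc (length pre))) (y + int (Suc (length pre)))
           * nsum (\<lambda>l3. F' j ((pre @ map (\<lambda>k. k + 2) post) @ map (\<lambda>k. k + 2) l3)) (s # V))"
    by (simp add: t_def nsum_add nsum_sum_commute nsum_distrib_left)
qed

lemma Dop_factors_triple_gsum:
  fixes G :: "int list \<Rightarrow> 'a::field_char_0"
  assumes "Dop_factors (length l1 + 3) J G B G'"
  shows "gsum (\<lambda>X. gsum (\<lambda>Y. gsum (\<lambda>Z. G (l1 @ [X, Y, Z])) y s) x y) p x
       + gsum (\<lambda>X. gsum (\<lambda>Y. gsum (\<lambda>Z. G (l1 @ [X, Y, Z])) (x-1) s) (y+1) (x-1)) p (y+1)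
     = - (\<Sum>j\<in>J. box_sum (B j) (x + int (Suc (length l1))) (y + int (Suc (length l1)))
            * gsum (\<lambda>W. G' j (l1 @ [W])) p (s + 2)) / 2"
proof -
  define t where "t = int (Suc (length l1))"
  note G_factors = assms[unfolded Dop_factors_iff, rule_format]
  have swap12: "G (l1 @ [X, Y, Z]) + G (l1 @ [Y + 1, X - 1, Z])
      = (\<Sum>j\<in>J. B j (X + t) (Y + t) * G' j (l1 @ [Z + 2]))"
    and swap23: "G (l1 @ [X, Y, Z]) + G (l1 @ [X, Z + 1, Y - 1])
      = (\<Sum>j\<in>J. B j (Y + 1 + t) (Z + 1 + t) * G' j (l1 @ [X]))" for X Y Z
    using G_factors[of l1 "[Z]" X Y] G_factors[of "l1 @ [X]" "[]" Y Z]
    by (simp_all add: t_def add.commute add.left_commute)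
  have box: "box_sum (\<lambda>X Y. B j (X + t) (Y + t)) x y = box_sum (B j) (x + t) (y + t)" for j
    by (rule box_sum_shift[symmetric])
  show ?thesis
    unfolding t_def[symmetric]
    using triple_gsum_Dop_identity[where h="\<lambda>X Y Z. G (l1 @ [X, Y, Z])"
        and E="\<lambda>j X Y. B j (X + t) (Y + t)" and K="\<lambda>j W. G' j (l1 @ [W])"
        and a=x and b=y, OF swap12 swap23]
    unfolding box .
qed

lemma Dop_factors_interlacing_sum:
  fixes F :: "int list \<Rightarrow> 'a::field_char_0"
  assumes factors: "Dop_factors (Suc N) J F B F'"
  shows "Dop_factors N J (interlacing_sum c F) (\<lambda>j x y. - box_sum (B j) x y / 2)
           (\<lambda>j. interlacing_sum (c + 2) (F' j))"
  unfolding Dop_factors_iff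
proof (intro allI impI)
  fix pre post :: "int list" and x y :: int
  assume len: "length pre + length post + 2 = N"
  obtain s V where sV: "post @ [c] = s # V"
    by (metis append_is_Nil_conv neq_Nil_conv not_Cons_self2)
  define t where "t = int (Suc (length pre))"
  define p where "p = last (0 # pre)"
  \<comment> \<open>Sum out the variables after the three whose bounds are moved by the swap.\<close>
  define G where "G ls = nsum (\<lambda>l3. F (ls @ l3)) (s # V)" for ls
  define G' where "G' j ls = nsum (\<lambda>l3. F' j (ls @ map (\<lambda>k. k + 2) l3)) (s # V)" for j ls
  have "Suc N = length pre + 3 + length V"
    using len arg_cong[OF sV, of length] by simp
  with factors have G_factors: "Dop_factors (length pre + 3) J G B G'"
    unfolding G_def G'_def by (metis Dop_factors_suffix_nsum)
  have "interlacing_sum c F (pre @ x # y # post) + interlacing_sum c F (pre @ (y+1) # (x-1) # post)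
      = nsum (\<lambda>l1. gsum (\<lambda>X. gsum (\<lambda>Y. gsum (\<lambda>Z. G (l1 @ [X, Y, Z])) y s) x y) p x
          + gsum (\<lambda>X. gsum (\<lambda>Y. gsum (\<lambda>Z. G (l1 @ [X, Y, Z])) (x-1) s) (y+1) (x-1)) p (y+1)) (0 # pre)"
    unfolding interlacing_sum_split3[OF sV] nsum_add p_def G_def by simp
  also have "\<dots> = nsum (\<lambda>l1. - (\<Sum>j\<in>J. box_sum (B j) (x + t) (y + t)
                                  * gsum (\<lambda>W. G' j (l1 @ [W])) p (s + 2)) / 2) (0 # pre)"
    by (rule nsum_cong) (use G_factors in \<open>simp add: Dop_factors_triple_gsum t_def\<close>)
  also have "\<dots> = (\<Sum>j\<in>J. - box_sum (B j) (x + t) (y + t) / 2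
                      * interlacing_sum (c + 2) (F' j) (pre @ map (\<lambda>k. k + 2) post))"
  proof -
    have "interlacing_sum (c + 2) (F' j) (pre @ map (\<lambda>k. k + 2) post)
        = nsum (\<lambda>l1. gsum (\<lambda>W. G' j (l1 @ [W])) p (s + 2)) (0 # pre)" for j
      unfolding interlacing_sum_split1_shifted[OF sV] p_def G'_def by simp
    moreover have "- (\<Sum>j\<in>J. box_sum (B j) (x + t) (y + t) * g j) / 2
        = (\<Sum>j\<in>J. - box_sum (B j) (x + t) (y + t) / 2 * g j)" for g :: "'b \<Rightarrow> 'a"
      by (simp add: sum_divide_distrib sum_negf)
    ultimately show ?thesis
      by (simp only: nsum_sum_commute flip: nsum_distrib_left)
  qed
  finally show "interlacing_sum c F (pre @ x # y # post) + interlacing_sum c F (pre @ (y+1) # (x-1) # post)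
      = (\<Sum>j\<in>J. - box_sum (B j) (x + int (Suc (length pre))) (y + int (Suc (length pre))) / 2
           * interlacing_sum (c + 2) (F' j) (pre @ map (\<lambda>k. k + 2) post))"
    unfolding t_def .
qed

definition Gq_coeff :: "'a::field \<Rightarrow> nat \<Rightarrow> nat \<Rightarrow> 'a" where
  "Gq_coeff q n r = (-1) ^ r / 2 ^ r * q powi (int r * (- 2 * int n + int r + 1))"

lemma Gq_coeff_Suc:
  assumes "q \<noteq> 0" and "r < n"
  shows "Gq_coeff q n (Suc r) = - (q powi (2 - 2 * int (n - r)) * Gq_coeff q n r) / 2"
proof -
  have "int (Suc r) * (- 2 * int n + int (Suc r) + 1)
      = (2 - 2 * int (n - r)) + int r * (- 2 * int n + int r + 1)"
    using assms(2) by (simp add: algebra_simps)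
  then show ?thesis
    by (simp add: Gq_coeff_def assms(1) power_int_add mult_ac)
qed

lemma Dop_factors_Gq:
  fixes q :: "'a::field_char_0"
  assumes q: "q \<noteq> 0" and factors: "Dop_factors n J A B A'" and "r \<le> n"
  shows "Dop_factors (n - r) J (Gq q r n c A) (\<lambda>j x y. Gq_coeff q n r * Dr q r (B j) x y)
           (\<lambda>j. Gq q r (n - 2) (c + 2) (A' j))"
  using \<open>r \<le> n\<close>
proof (induction r)
  case 0
  with factors show ?case
    by (simp add: Gq_coeff_def)
next
  case (Suc r)
  define w where "w = q powi (2 - 2 * int (n - r))"
  have "n - r = Suc (n - Suc r)"
    using Suc.prems by simp
  with Dop_factors_weight[OF q Suc.IH] Suc.prems
  have weighted: "Dop_factors (Suc (n - Suc r)) J (\<lambda>ls. Gq q r n c A ls * q powi sum_list ls)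
      (\<lambda>j x y. w * (Gq_coeff q n r * Dr q r (B j) x y * q powi (x + y)))
      (\<lambda>j ls. Gq q r (n - 2) (c + 2) (A' j) ls * q powi sum_list ls)"
    by (simp add: w_def)
  have "box_sum (\<lambda>x y. w * (Gq_coeff q n r * Dr q r (B j) x y * q powi (x + y))) x y
      = w * Gq_coeff q n r * Dr q (Suc r) (B j) x y" for j x y
    by (simp add: box_sum_def gsum_distrib_left mult_ac)
  then have "- box_sum (\<lambda>x y. w * (Gq_coeff q n r * Dr q r (B j) x y * q powi (x + y))) x y / 2
      = Gq_coeff q n (Suc r) * Dr q (Suc r) (B j) x y" for j x y
    using Gq_coeff_Suc[OF q, of r n] Suc.prems by (simp add: w_def)
  with Dop_factors_interlacing_sum[OF weighted, of c] show ?case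
    unfolding Gq_Suc_interlacing_sum by simp
qed

theorem lemma13:
  fixes q :: "'a::field_char_0" and n r m :: nat and c :: int
    and A :: "int list \<Rightarrow> 'a"
    and B :: "nat \<Rightarrow> int \<Rightarrow> int \<Rightarrow> 'a"
    and A' :: "nat \<Rightarrow> int list \<Rightarrow> 'a"
  assumes q_nz: "q \<noteq> 0"
    and r_le: "r \<le> n"
    and hyp: "\<And>i ks. 1 \<le> i \<Longrightarrow> i \<le> n - 1 \<Longrightarrow> length ks = n \<Longrightarrow>
       Dop i A ks = (\<Sum>j = 1..m. B j (ks ! (i - 1) + int i) (ks ! i + int i)
                       * A' j (take (i - 1) ks @ map (\<lambda>k. k + 2) (drop (i + 1) ks)))"
  shows "\<forall>i ks. 1 \<le> i \<and> i \<le> n - r - 1 \<and> length ks = n - r \<longrightarrow>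
       Dop i (Gq q r n c A) ks =
         (\<Sum>j = 1..m. ((-1) ^ r / 2 ^ r) * q powi (int r * (- 2 * int n + int r + 1))
            * Dr q r (B j) (ks ! (i - 1) + int i) (ks ! i + int i)
            * Gq q r (n - 2) (c + 2) (A' j) (take (i - 1) ks @ map (\<lambda>k. k + 2) (drop (i + 1) ks)))"
proof -
  have "Dop_factors n {1..m} A B A'"
    using hyp unfolding Dop_factors_def by blast
  from Dop_factors_Gq[OF q_nz this r_le, of c] show ?thesis
    unfolding Dop_factors_def Gq_coeff_def .
qed

end
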